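(* Let $G$ be a group with weak paradoxical towers. Then $G$ is not amenable.
   Context: For $n\in\mathbb N$, a group $G$ has weak $n$-paradoxical towers if for every $m\in\mathbb N$ there exist a finite subset $D\subseteq G$ with $|D|\ge m$, subsets $K_1,\dots,K_n\subseteq G$ and elements $g_1,\dots,g_n\in G$ such that for each $j$ the sets $\{dK_j\}_{d\in D}$ are pairwise disjoint, and $\bigcup_{j=1}^n g_jK_j=G$. $G$ has weak paradoxical towers if it has weak $n$-paradoxical towers for some $n$. *)

theory Defs
  imports Complex_Main "HOL-Algebra.Coset"
begin

text \<open>Weak n-paradoxical towers (indices j range over {0..<n} instead of {1..n}).
  Left translates d K are the left cosets d <# K.\<close>
definition weak_n_paradoxical_towers :: "('a, 'b) monoid_scheme \<Rightarrow> nat \<Rightarrow> bool" where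
  "weak_n_paradoxical_towers G n \<longleftrightarrow>
     (\<forall>m::nat. \<exists>D K g.
        finite D \<and> D \<subseteq> carrier G \<and> card D \<ge> m \<and>
        (\<forall>j<n. K j \<subseteq> carrier G) \<and> (\<forall>j<n. g j \<in> carrier G) \<and>
        (\<forall>j<n. \<forall>d\<in>D. \<forall>d'\<in>D. d \<noteq> d' \<longrightarrow> (d <#\<^bsub>G\<^esub> K j) \<inter> (d' <#\<^bsub>G\<^esub> K j) = {}) \<and>
        (\<Union>j<n. g j <#\<^bsub>G\<^esub> K j) = carrier G)"

definition weak_paradoxical_towers :: "('a, 'b) monoid_scheme \<Rightarrow> bool" where
  "weak_paradoxical_towers G \<longleftrightarrow> (\<exists>n. weak_n_paradoxical_towers G n)"

definition amenable :: "('a, 'b) monoid_scheme \<Rightarrow> bool" where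
  "amenable G \<longleftrightarrow>
     (\<exists>\<mu> :: 'a set \<Rightarrow> real.
        (\<forall>A. A \<subseteq> carrier G \<longrightarrow> \<mu> A \<ge> 0) \<and>
        \<mu> (carrier G) = 1 \<and>
        (\<forall>A B. A \<subseteq> carrier G \<longrightarrow> B \<subseteq> carrier G \<longrightarrow> A \<inter> B = {} \<longrightarrow> \<mu> (A \<union> B) = \<mu> A + \<mu> B) \<and>
        (\<forall>g A. g \<in> carrier G \<longrightarrow> A \<subseteq> carrier G \<longrightarrow> \<mu> (g <#\<^bsub>G\<^esub> A) = \<mu> A))"

end

theory Submission
  imports Defs "HOL-Library.Disjoint_Sets"
begin

text \<open>An invariant mean gives each tower base \<open>K\<^sub>j\<close> measure at most \<open>1 / |D|\<close>, because its
  \<open>|D|\<close> pairwise disjoint translates \<open>d K\<^sub>j\<close> all have the measure of \<open>K\<^sub>j\<close> and fit into \<open>G\<close>.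
  On the other hand the \<open>n\<close> translates \<open>g\<^sub>j K\<^sub>j\<close> cover \<open>G\<close>, so \<open>1 \<le> n / |D|\<close>, which fails as
  soon as \<open>|D| > n\<close>.\<close>

locale finitely_additive_measure =
  fixes \<Omega> :: "'a set" and \<mu> :: "'a set \<Rightarrow> real"
  assumes measure_nonneg: "A \<subseteq> \<Omega> \<Longrightarrow> 0 \<le> \<mu> A"
    and measure_union_disjoint:
      "A \<subseteq> \<Omega> \<Longrightarrow> B \<subseteq> \<Omega> \<Longrightarrow> A \<inter> B = {} \<Longrightarrow> \<mu> (A \<union> B) = \<mu> A + \<mu> B"
begin

lemma measure_empty: "\<mu> {} = 0"
  using measure_union_disjoint[of "{}" "{}"] by simp

lemma measure_mono:
  assumes "A \<subseteq> B" "B \<subseteq> \<Omega>"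
  shows "\<mu> A \<le> \<mu> B"
proof -
  have "\<mu> B = \<mu> (A \<union> (B - A))"
    using assms(1) by (simp add: Un_absorb1)
  also have "\<dots> = \<mu> A + \<mu> (B - A)"
    using assms by (intro measure_union_disjoint) auto
  finally have "\<mu> B = \<mu> A + \<mu> (B - A)" .
  moreover have "0 \<le> \<mu> (B - A)"
    using assms by (intro measure_nonneg) auto
  ultimately show ?thesis
    by simp
qed

lemma measure_union_le:
  assumes "A \<subseteq> \<Omega>" "B \<subseteq> \<Omega>"
  shows "\<mu> (A \<union> B) \<le> \<mu> A + \<mu> B"
proof -
  have "\<mu> (A \<union> B) = \<mu> A + \<mu> (B - A)"
    using measure_union_disjoint[of A "B - A"] assms by auto
  then show ?thesis
    using measure_mono[of "B - A" B] assms by simp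
qed

lemma measure_UN_le:
  "finite I \<Longrightarrow> (\<And>i. i \<in> I \<Longrightarrow> A i \<subseteq> \<Omega>) \<Longrightarrow> \<mu> (\<Union>i\<in>I. A i) \<le> (\<Sum>i\<in>I. \<mu> (A i))"
proof (induction I rule: finite_induct)
  case empty
  then show ?case by (simp add: measure_empty)
next
  case (insert x F)
  then have "\<mu> (A x \<union> (\<Union>i\<in>F. A i)) \<le> \<mu> (A x) + \<mu> (\<Union>i\<in>F. A i)"
    by (intro measure_union_le) auto
  with insert show ?case by simp
qed

lemma measure_UN_disjoint:
  "finite I \<Longrightarrow> (\<And>i. i \<in> I \<Longrightarrow> A i \<subseteq> \<Omega>) \<Longrightarrow> disjoint_family_on A I \<Longrightarrow>
    \<mu> (\<Union>i\<in>I. A i) = (\<Sum>i\<in>I. \<mu> (A i))"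
proof (induction I rule: finite_induct)
  case empty
  then show ?case by (simp add: measure_empty)
next
  case (insert x F)
  have "A x \<inter> (\<Union>i\<in>F. A i) = {}"
    using insert.prems(2) insert.hyps(2) by (auto simp: disjoint_family_on_def)
  then have "\<mu> (A x \<union> (\<Union>i\<in>F. A i)) = \<mu> (A x) + \<mu> (\<Union>i\<in>F. A i)"
    using insert.prems(1) by (intro measure_union_disjoint) auto
  also have "\<mu> (\<Union>i\<in>F. A i) = (\<Sum>i\<in>F. \<mu> (A i))"
    using insert.prems by (intro insert.IH) (auto intro: disjoint_family_on_mono)
  finally show ?case
    using insert.hyps by simp
qed

end

locale invariant_mean = group G + finitely_additive_measure "carrier G" \<mu>
  for G (structure) and \<mu> :: "'a set \<Rightarrow> real" +
  assumes measure_carrier: "\<mu> (carrier G) = 1"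
    and measure_l_coset: "g \<in> carrier G \<Longrightarrow> A \<subseteq> carrier G \<Longrightarrow> \<mu> (g <# A) = \<mu> A"
begin

lemma card_mult_measure_le_one:
  assumes "finite D" "D \<subseteq> carrier G" "K \<subseteq> carrier G"
    and disjoint: "\<And>d d'. d \<in> D \<Longrightarrow> d' \<in> D \<Longrightarrow> d \<noteq> d' \<Longrightarrow> (d <# K) \<inter> (d' <# K) = {}"
  shows "real (card D) * \<mu> K \<le> 1"
proof -
  have translates_in_G: "d <# K \<subseteq> carrier G" if "d \<in> D" for d
    using that assms l_coset_subset_G by blast
  have "real (card D) * \<mu> K = (\<Sum>d\<in>D. \<mu> (d <# K))"
    using assms measure_l_coset by (simp add: subset_iff)
  also have "\<dots> = \<mu> (\<Union>d\<in>D. d <# K)"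
    using assms translates_in_G
    by (intro measure_UN_disjoint[symmetric]) (auto simp: disjoint_family_on_def)
  also have "\<dots> \<le> \<mu> (carrier G)"
    using translates_in_G by (intro measure_mono) auto
  finally show ?thesis
    using measure_carrier by simp
qed

lemma one_le_sum_if_translates_cover:
  fixes n :: nat
  assumes "\<And>j. j < n \<Longrightarrow> K j \<subseteq> carrier G" "\<And>j. j < n \<Longrightarrow> g j \<in> carrier G"
    and "(\<Union>j<n. g j <# K j) = carrier G"
  shows "1 \<le> (\<Sum>j<n. \<mu> (K j))"
proof -
  have "1 = \<mu> (\<Union>j<n. g j <# K j)"
    using assms(3) measure_carrier by simp
  also have "\<dots> \<le> (\<Sum>j<n. \<mu> (g j <# K j))"
    using assms(1,2) by (intro measure_UN_le) (simp_all add: l_coset_subset_G)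
  also have "\<dots> = (\<Sum>j<n. \<mu> (K j))"
    using assms(1,2) measure_l_coset by simp
  finally show ?thesis .
qed

lemma not_weak_n_paradoxical_towers: "\<not> weak_n_paradoxical_towers G n"
proof
  assume towers: "weak_n_paradoxical_towers G n"
  obtain D K g where D: "finite D" "D \<subseteq> carrier G" "n + 1 \<le> card D"
    and K: "\<forall>j<n. K j \<subseteq> carrier G" and g: "\<forall>j<n. g j \<in> carrier G"
    and disjoint: "\<forall>j<n. \<forall>d\<in>D. \<forall>d'\<in>D. d \<noteq> d' \<longrightarrow> (d <# K j) \<inter> (d' <# K j) = {}"
    and cover: "(\<Union>j<n. g j <# K j) = carrier G"
    using towers[unfolded weak_n_paradoxical_towers_def, THEN spec[of _ "n + 1"]] by blast
  have base_small: "\<mu> (K j) \<le> 1 / real (n + 1)" if "j < n" for j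
  proof -
    have "real (n + 1) * \<mu> (K j) \<le> real (card D) * \<mu> (K j)"
      using D K that measure_nonneg by (intro mult_right_mono) auto
    also have "\<dots> \<le> 1"
      using D K disjoint that by (intro card_mult_measure_le_one) auto
    finally show ?thesis
      by (simp add: field_simps)
  qed
  have "1 \<le> (\<Sum>j<n. \<mu> (K j))"
    using K g cover by (intro one_le_sum_if_translates_cover) auto
  also have "\<dots> \<le> real n / real (n + 1)"
    using sum_mono[of "{..<n}" "\<lambda>j. \<mu> (K j)" "\<lambda>_. 1 / real (n + 1)"] base_small by simp
  finally show False
    by simp
qed

end

lemma amenable_imp_invariant_mean:
  assumes "group G" "amenable G"
  obtains \<mu> where "invariant_mean G \<mu>"
  using assms unfolding amenable_def invariant_mean_def invariant_mean_axioms_def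
    finitely_additive_measure_def
  by blast

theorem lemma3p11:
  assumes "group G" and "weak_paradoxical_towers G"
  shows "\<not> amenable G"
proof
  assume "amenable G"
  with assms(1) obtain \<mu> where "invariant_mean G \<mu>"
    by (rule amenable_imp_invariant_mean)
  then show False
    using assms(2) invariant_mean.not_weak_n_paradoxical_towers
    unfolding weak_paradoxical_towers_def by blast
qed

end
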